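(* Let $\Omega\subseteq\mathbb{R}^N$ be open and bounded and let $T$ be the operator described in the context. Then $T$ is bounded from $L^1(\Omega)$ to weak-$L^1(\Omega)$, i.e., there is a constant $M_1>0$ such that for every $f\in L^1(\Omega)$ and every $\lambda>0$, $$\big|\{x\in\Omega:\ |Tf(x)|>\lambda\}\big|\le\frac{M_1}{\lambda}\|f\|_{L^1(\Omega)}.$$
   Context: $\rho\in C_c^\infty(\mathbb{R}^N)$ satisfies $0\le\rho\le1$, $\rho(x)=0$ iff $|x|\ge1$, $\rho$ is radially symmetric, and $\rho(x)\ge\rho(1/2)$ for all $|x|<1/2$ (where $\rho(1/2)$ denotes the common value of $\rho$ on the sphere $|x|=1/2$). Set $M_\rho:=(\int_{B_1(0)}\rho(y)\,dy)^{-1}$. Let $\Delta\subseteq\overline{\Omega}$ (possibly empty) be such that $\Theta:=\partial\Omega\cup\Delta$ is closed, and let $\eta\in C^\infty(\mathbb{R}^N)$ be non-negative with $\eta^{-1}(\{0\})=\Theta$, all derivatives of $\eta$ vanishing on $\Theta$, and $\eta(x)<\mathrm{dist}(x,\Theta)$ for every $x\in\mathbb{R}^N\setminus\Theta$. For $f\in L^1_{loc}(\Omega)$ and $x\in\Omega$ define $Tf(x):=M_\rho\int_{B_1(0)}\rho(z)f(x-\eta(x)z)\,dz$; thus $Tf(x)=f(x)$ if $\eta(x)=0$ and $Tf(x)=\frac{M_\rho}{\eta(x)^N}\int_\Omega\rho\big(\frac{x-y}{\eta(x)}\big)f(y)\,dy$ if $\eta(x)>0$. *)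

theory Defs
  imports "HOL-Analysis.Analysis"
begin

fun iter_pd :: "'a::euclidean_space list \<Rightarrow> ('a \<Rightarrow> real) \<Rightarrow> ('a \<Rightarrow> real)" where
  "iter_pd [] f = f"
| "iter_pd (v # vs) f = (\<lambda>x. frechet_derivative (iter_pd vs f) (at x) v)"

definition smooth_fun :: "('a::euclidean_space \<Rightarrow> real) \<Rightarrow> bool" where
  "smooth_fun f \<longleftrightarrow> (\<forall>vs. set vs \<subseteq> Basis \<longrightarrow> (\<forall>x. iter_pd vs f differentiable (at x)))"

definition M_rho :: "('a::euclidean_space \<Rightarrow> real) \<Rightarrow> real" where
  "M_rho \<rho> = inverse (LINT y : ball 0 1 | lebesgue. \<rho> y)"

definition T_op :: "('a::euclidean_space \<Rightarrow> real) \<Rightarrow> ('a \<Rightarrow> real) \<Rightarrow> ('a \<Rightarrow> real) \<Rightarrow> 'a \<Rightarrow> real" where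
  "T_op \<rho> \<eta> f x = M_rho \<rho> * (LINT z : ball 0 1 | lebesgue. \<rho> z * f (x - \<eta> x *\<^sub>R z))"

end

theory Submission
  imports Defs
begin

(* Off the zero set of eta, Tf(x) = M_rho eta(x)^-N * (integral over Omega of rho((x - y)/eta(x)) f(y) dy),
   because the ball B(x, eta(x)) lies in Omega. This expression is continuous in x, so the superlevel
   set {|Tf| > lam} is open there, and it is bounded by M_rho eta(x)^-N times the integral of |f| over
   B(x, eta(x)). Hence every point of the superlevel set is the centre of a ball B with
   |B| <= |B_1| M_rho / lam * (integral of |f| over B), and the Vitali covering lemma gives the bound
   5^N |B_1| M_rho / lam * ||f||_1. On the zero set of eta, Tf = f and Chebyshev's inequality applies.
   Only continuity of rho and eta, 0 <= rho <= 1, rho > 0 exactly on the open unit ball and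
   eta < dist(., Theta) are used. *)

lemma lebesgue_affine:
  fixes t :: "'a::euclidean_space" and c :: real
  assumes "c \<noteq> 0"
  shows "lebesgue = density (distr lebesgue lebesgue (\<lambda>x. t + c *\<^sub>R x)) (\<lambda>_. ennreal (\<bar>c\<bar> ^ DIM('a)))"
    and "(\<lambda>x. t + c *\<^sub>R x) \<in> lebesgue \<rightarrow>\<^sub>M lebesgue"
  using lebesgue_affine_euclidean[where c="\<lambda>_::'a. c" and t=t]
    lebesgue_affine_measurable[where c="\<lambda>_::'a. c" and t=t] assms
  unfolding scaleR_scaleR[symmetric] scaleR_sum_right[symmetric] euclidean_representation prod_constant
  by auto

lemma lebesgue_integral_affine:
  fixes h :: "'a::euclidean_space \<Rightarrow> real" and c :: real
  assumes c: "c \<noteq> 0" and h: "h \<in> borel_measurable lebesgue"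
  shows "(\<integral>y. h y \<partial>lebesgue) = \<bar>c\<bar> ^ DIM('a) * (\<integral>z. h (t + c *\<^sub>R z) \<partial>lebesgue)"
proof -
  note affine = lebesgue_affine[OF c, of t]
  have "(\<integral>y. h y \<partial>lebesgue)
      = (\<integral>y. h y \<partial>density (distr lebesgue lebesgue (\<lambda>x. t + c *\<^sub>R x)) (\<lambda>_. ennreal (\<bar>c\<bar> ^ DIM('a))))"
    using affine(1) by simp
  also have "\<dots> = (\<integral>y. \<bar>c\<bar> ^ DIM('a) * h y \<partial>distr lebesgue lebesgue (\<lambda>x. t + c *\<^sub>R x))"
    by (subst integral_density) (use h in auto)
  also have "\<dots> = (\<integral>z. \<bar>c\<bar> ^ DIM('a) * h (t + c *\<^sub>R z) \<partial>lebesgue)"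
    by (subst integral_distr) (use h affine(2) in auto)
  finally show ?thesis by simp
qed

lemma lebesgue_measurable_ident: "(\<lambda>x::'a::euclidean_space. x) \<in> borel_measurable lebesgue"
  by (rule measurable_completion) simp

lemma set_integral_mono_set:
  fixes h :: "'a \<Rightarrow> real"
  assumes "set_integrable M S h" and "A \<in> sets M" and "A \<subseteq> S" and "\<And>x. x \<in> S \<Longrightarrow> 0 \<le> h x"
  shows "(LINT x:A|M. h x) \<le> (LINT x:S|M. h x)"
  using assms set_integrable_subset[OF assms(1-3)]
  unfolding set_lebesgue_integral_def set_integrable_def
  by (intro integral_mono) (auto simp: indicator_def)

lemma measure_abs_greater_le_set_integral:
  fixes f :: "'a \<Rightarrow> real"
  assumes f: "set_integrable M \<Omega> f" and \<Omega>: "\<Omega> \<in> sets M" and A: "A \<in> sets M" "A \<subseteq> \<Omega>" and c: "0 < c"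
  shows "{x \<in> A. c < \<bar>f x\<bar>} \<in> sets M"
    and "measure M {x \<in> A. c < \<bar>f x\<bar>} \<le> (LINT x:\<Omega>|M. \<bar>f x\<bar>) / c"
proof -
  have [measurable]: "(\<lambda>x. indicator \<Omega> x * f x) \<in> borel_measurable M"
    using f unfolding set_integrable_def by (simp add: borel_measurable_integrable)
  have level_sets: "{x \<in> B. P \<bar>indicator \<Omega> x * f x\<bar>} \<in> sets M" if "B \<in> sets M" "Measurable.pred borel P" for B P
    using that by measurable
  have "{x \<in> A. c < \<bar>f x\<bar>} = {x \<in> A. c < \<bar>indicator \<Omega> x * f x\<bar>}"
    using A(2) by (auto simp: indicator_def)
  then show "{x \<in> A. c < \<bar>f x\<bar>} \<in> sets M"
    using level_sets[OF A(1), of "(<) c"] by simp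
  moreover have "emeasure M {x \<in> \<Omega>. c \<le> \<bar>f x\<bar>} \<le> (1 / c) * (LINT x:\<Omega>|M. \<bar>f x\<bar>)"
    using set_integrable_abs[OF f] \<Omega> c by (intro integral_Markov_inequality') auto
  moreover have "{x \<in> \<Omega>. c \<le> \<bar>f x\<bar>} = {x \<in> \<Omega>. c \<le> \<bar>indicator \<Omega> x * f x\<bar>}"
    by (auto simp: indicator_def)
  then have "{x \<in> \<Omega>. c \<le> \<bar>f x\<bar>} \<in> sets M"
    using level_sets[OF \<Omega>, of "(\<le>) c"] by simp
  ultimately have "measure M {x \<in> A. c < \<bar>f x\<bar>} \<le> measure M {x \<in> \<Omega>. c \<le> \<bar>f x\<bar>}"
    using A(2) by (intro measure_mono_fmeasurable) (auto simp: fmeasurable_def top.not_eq_extremum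
        intro: le_less_trans)
  also have "\<dots> \<le> (LINT x:\<Omega>|M. \<bar>f x\<bar>) / c"
    using set_integrable_abs[OF f] \<Omega> c by (intro integral_Markov_inequality'_measure) auto
  finally show "measure M {x \<in> A. c < \<bar>f x\<bar>} \<le> (LINT x:\<Omega>|M. \<bar>f x\<bar>) / c" .
qed

lemma measure_ball_scale:
  fixes x :: "'a::euclidean_space"
  assumes "0 \<le> a" and "0 \<le> r"
  shows "measure lebesgue (ball x (a * r)) = a ^ DIM('a) * measure lebesgue (ball x r)"
  using content_ball_conv_unit_ball[of "a * r" x] content_ball_conv_unit_ball[of r x] assms
  by (simp add: power_mult_distrib)

lemma Vitali_measure_le_compact:
  fixes r h :: "'a::euclidean_space \<Rightarrow> real"
  assumes K: "compact K" and r_pos: "\<And>x. x \<in> K \<Longrightarrow> 0 < r x"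
    and ball_sub: "\<And>x. x \<in> K \<Longrightarrow> ball x (r x) \<subseteq> S"
    and h: "set_integrable lebesgue S h" and h_nonneg: "\<And>y. y \<in> S \<Longrightarrow> 0 \<le> h y" and A: "0 \<le> A"
    and ball_le: "\<And>x. x \<in> K \<Longrightarrow> measure lebesgue (ball x (r x)) \<le> A * (LINT y:ball x (r x)|lebesgue. h y)"
  shows "measure lebesgue K \<le> 5 ^ DIM('a) * A * (LINT y:S|lebesgue. h y)"
proof -
  have "K \<subseteq> (\<Union>x\<in>K. ball x (r x))"
    using r_pos by auto
  then obtain F where F: "F \<subseteq> K" "finite F" "K \<subseteq> (\<Union>x\<in>F. ball x (r x))"
    using compactE_image[OF K, of K "\<lambda>x. ball x (r x)"] by auto
  obtain C where C: "C \<subseteq> F" "pairwise (\<lambda>i j. disjnt (ball i (r i)) (ball j (r j))) C"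
     "K \<subseteq> (\<Union>i\<in>C. ball i (5 * r i))"
    by (rule Vitali_covering_lemma_balls[where S=K and K=F and a="\<lambda>x. x" and r=r and B="Max (r ` F)"])
       (use F r_pos in auto)
  have C_fin: "finite C" using C(1) F(2) finite_subset by blast
  have C_K: "i \<in> K" if "i \<in> C" for i using that C(1) F(1) by auto
  have "measure lebesgue K \<le> measure lebesgue (\<Union>i\<in>C. ball i (5 * r i))"
    using C(3) C_fin K by (intro measure_mono_fmeasurable) (auto simp: compact_imp_closed)
  also have "\<dots> \<le> (\<Sum>i\<in>C. measure lebesgue (ball i (5 * r i)))"
    using C_fin by (intro measure_UNION_le) auto
  also have "\<dots> = (\<Sum>i\<in>C. 5 ^ DIM('a) * measure lebesgue (ball i (r i)))"
    using C_K r_pos by (intro sum.cong refl measure_ball_scale) (auto intro: less_imp_le)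
  also have "\<dots> \<le> (\<Sum>i\<in>C. 5 ^ DIM('a) * (A * (LINT y:ball i (r i)|lebesgue. h y)))"
    using C_K ball_le by (intro sum_mono mult_left_mono) auto
  also have "\<dots> = 5 ^ DIM('a) * A * (LINT y:(\<Union>i\<in>C. ball i (r i))|lebesgue. h y)"
  proof -
    have "disjoint_family_on (\<lambda>i. ball i (r i)) C"
      using C(2) unfolding disjoint_family_on_def pairwise_def disjnt_def by metis
    then show ?thesis
      using C_fin C_K ball_sub
      by (simp add: sum_distrib_left set_integral_finite_Union set_integrable_subset[OF h] mult.assoc)
  qed
  also have "\<dots> \<le> 5 ^ DIM('a) * A * (LINT y:S|lebesgue. h y)"
    using C_K ball_sub C_fin A by (intro mult_left_mono set_integral_mono_set[OF h _ _ h_nonneg]) auto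
  finally show ?thesis .
qed

lemma Vitali_measure_le:
  fixes r h :: "'a::euclidean_space \<Rightarrow> real"
  assumes E: "E \<in> sets lebesgue" "bounded E" and r_pos: "\<And>x. x \<in> E \<Longrightarrow> 0 < r x"
    and ball_sub: "\<And>x. x \<in> E \<Longrightarrow> ball x (r x) \<subseteq> S"
    and h: "set_integrable lebesgue S h" and h_nonneg: "\<And>y. y \<in> S \<Longrightarrow> 0 \<le> h y" and A: "0 \<le> A"
    and ball_le: "\<And>x. x \<in> E \<Longrightarrow> measure lebesgue (ball x (r x)) \<le> A * (LINT y:ball x (r x)|lebesgue. h y)"
  shows "measure lebesgue E \<le> 5 ^ DIM('a) * A * (LINT y:S|lebesgue. h y)"
proof (rule field_le_epsilon)
  fix \<epsilon> :: real assume "0 < \<epsilon>"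
  then obtain K where K: "closed K" "K \<subseteq> E" "E - K \<in> lmeasurable" "emeasure lebesgue (E - K) < \<epsilon>"
    using sets_lebesgue_inner_closed[OF E(1)] by blast
  have "compact K"
    using K(1,2) E(2) bounded_subset by (auto simp: compact_eq_bounded_closed)
  have "E \<in> lmeasurable"
    using E by (intro bounded_set_imp_lmeasurable)
  moreover have "K \<in> sets lebesgue"
    using K(1) by simp
  ultimately have "measure lebesgue (E - K) = measure lebesgue E - measure lebesgue K"
    using K(2) by (intro measure_Diff) (auto simp: fmeasurable_def)
  then have "measure lebesgue E = measure lebesgue K + measure lebesgue (E - K)"
    by simp
  also have "measure lebesgue (E - K) < \<epsilon>"
    using K(3,4) \<open>0 < \<epsilon>\<close> by (simp add: emeasure_eq_measure2 ennreal_less_iff)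
  also have "measure lebesgue K \<le> 5 ^ DIM('a) * A * (LINT y:S|lebesgue. h y)"
    by (rule Vitali_measure_le_compact[OF \<open>compact K\<close> _ _ h h_nonneg A])
       (use K(2) r_pos ball_sub ball_le in blast)+
  finally show "measure lebesgue E \<le> 5 ^ DIM('a) * A * (LINT y:S|lebesgue. h y) + \<epsilon>"
    by simp
qed

lemma ball_subset_if_less_infdist:
  fixes \<Omega> \<Theta> :: "'a::euclidean_space set"
  assumes "x \<in> \<Omega>" and "frontier \<Omega> \<subseteq> \<Theta>" and "r < infdist x \<Theta>"
  shows "ball x r \<subseteq> \<Omega>"
proof
  fix y assume y: "y \<in> ball x r"
  show "y \<in> \<Omega>"
  proof (rule ccontr)
    assume "y \<notin> \<Omega>"
    then obtain p where p: "p \<in> closed_segment x y" "p \<in> frontier \<Omega>"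
      using connected_Int_frontier[of "closed_segment x y" \<Omega>] assms(1) by auto
    have "infdist x \<Theta> \<le> dist x p"
      using p(2) assms(2) by (intro infdist_le) auto
    also have "\<dots> \<le> dist x y"
      using dist_in_closed_segment[OF p(1)] by (simp add: dist_commute)
    also have "\<dots> < infdist x \<Theta>"
      using y assms(3) by simp
    finally show False by simp
  qed
qed

lemma smooth_fun_imp_continuous:
  assumes "smooth_fun f"
  shows "continuous_on UNIV f"
proof -
  have "f differentiable (at x)" for x
    using assms unfolding smooth_fun_def by (metis empty_set empty_subsetI iter_pd.simps(1))
  then show ?thesis
    by (auto intro: continuous_at_imp_continuous_on differentiable_imp_continuous_within)
qed

lemma M_rho_nonneg:
  assumes "\<And>z. 0 \<le> \<rho> z"
  shows "0 \<le> M_rho \<rho>"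
  unfolding M_rho_def set_lebesgue_integral_def
  using assms by (intro inverse_nonnegative_iff_nonnegative[THEN iffD2] Bochner_Integration.integral_nonneg)
    (simp add: indicator_def)

lemma M_rho_pos:
  fixes \<rho> :: "'a::euclidean_space \<Rightarrow> real"
  assumes \<rho>_meas: "\<rho> \<in> borel_measurable borel"
    and \<rho>_bounded: "\<And>z. 0 \<le> \<rho> z \<and> \<rho> z \<le> 1" and \<rho>_pos: "\<And>z. norm z < 1 \<Longrightarrow> 0 < \<rho> z"
  shows "0 < M_rho \<rho>"
proof -
  have int: "integrable lebesgue (\<lambda>z. indicator (ball (0::'a) 1) z * \<rho> z)"
  proof (rule Bochner_Integration.integrable_bound[where f="indicator (ball (0::'a) 1)"])
    show "integrable lebesgue (indicator (ball (0::'a) 1) :: 'a \<Rightarrow> real)"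
      by (intro integrable_real_indicator) (use emeasure_lborel_ball_finite[of "0::'a"] in auto)
    show "(\<lambda>z. indicator (ball (0::'a) 1) z * \<rho> z) \<in> borel_measurable lebesgue"
      using \<rho>_meas by (intro borel_measurable_times borel_measurable_indicator) (auto intro: measurable_completion)
  qed (use \<rho>_bounded in \<open>auto simp: indicator_def\<close>)
  have "(LINT z : ball 0 1 | lebesgue. \<rho> z) \<noteq> 0"
  proof
    assume "(LINT z : ball 0 1 | lebesgue. \<rho> z) = 0"
    then have "AE z in lebesgue. indicator (ball (0::'a) 1) z * \<rho> z = 0"
      using int \<rho>_bounded
      by (subst integral_nonneg_eq_0_iff_AE[symmetric]) (auto simp: set_lebesgue_integral_def)
    then have "AE z in lebesgue. z \<notin> ball (0::'a) 1"
      by eventually_elim (auto simp: indicator_def dest: \<rho>_pos)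
    then have "emeasure lebesgue (ball (0::'a) 1) = 0"
      by (subst AE_iff_measurable[symmetric]) auto
    then show False
      using content_ball_pos[of 1 "0::'a"] by (simp add: measure_def)
  qed
  then show ?thesis
    using M_rho_nonneg[of \<rho>] \<rho>_bounded unfolding M_rho_def by auto
qed

(* The hypothesis rules out the junk value M_rho \<rho> = inverse 0 = 0. *)
lemma T_op_eq_self:
  assumes "M_rho \<rho> \<noteq> 0" and "\<eta> x = 0"
  shows "T_op \<rho> \<eta> f x = f x"
  using assms unfolding T_op_def M_rho_def set_lebesgue_integral_def
  by (simp add: mult.assoc[symmetric])

lemma T_op_eq_kernel_integral:
  fixes \<rho> \<eta> f :: "'a::euclidean_space \<Rightarrow> real"
  assumes \<rho>_meas: "\<rho> \<in> borel_measurable borel" and \<rho>_supp: "\<And>z. 1 \<le> norm z \<Longrightarrow> \<rho> z = 0"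
    and f: "set_borel_measurable lebesgue \<Omega> f"
    and \<eta>_pos: "0 < \<eta> x" and ball_sub: "ball x (\<eta> x) \<subseteq> \<Omega>"
  shows "T_op \<rho> \<eta> f x = M_rho \<rho> / \<eta> x ^ DIM('a) * (LINT y:\<Omega>|lebesgue. \<rho> ((x - y) /\<^sub>R \<eta> x) * f y)"
proof -
  define e where "e = \<eta> x"
  define k where "k y = indicator \<Omega> y * (\<rho> ((x - y) /\<^sub>R e) * f y)" for y
  have k_meas: "k \<in> borel_measurable lebesgue"
  proof -
    note [measurable] = f[unfolded set_borel_measurable_def] \<rho>_meas lebesgue_measurable_ident
    have "k = (\<lambda>y. \<rho> ((x - y) /\<^sub>R e) * (indicator \<Omega> y *\<^sub>R f y))"
      by (simp add: k_def fun_eq_iff)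
    also have "\<dots> \<in> borel_measurable lebesgue" by measurable
    finally show ?thesis .
  qed
  have "indicator (ball 0 1) z * (\<rho> z * f (x - e *\<^sub>R z)) = k (x + (- e) *\<^sub>R z)" for z
  proof -
    have "(x - (x - e *\<^sub>R z)) /\<^sub>R e = z" using \<eta>_pos by (simp add: e_def)
    moreover have "x - e *\<^sub>R z \<in> \<Omega>" if "norm z < 1"
      using that \<eta>_pos ball_sub by (auto simp: e_def dist_norm)
    ultimately show ?thesis using \<rho>_supp[of z] by (auto simp: k_def indicator_def)
  qed
  then have "(LINT z : ball 0 1 | lebesgue. \<rho> z * f (x - e *\<^sub>R z)) = (\<integral>z. k (x + (- e) *\<^sub>R z) \<partial>lebesgue)"
    unfolding set_lebesgue_integral_def by simp
  also have "\<dots> = (\<integral>y. k y \<partial>lebesgue) / e ^ DIM('a)"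
    using lebesgue_integral_affine[OF _ k_meas, of "- e" x] \<eta>_pos by (simp add: e_def)
  finally show ?thesis
    unfolding T_op_def k_def set_lebesgue_integral_def e_def by simp
qed

lemma isCont_kernel_integral:
  fixes \<rho> \<eta> f :: "'a::euclidean_space \<Rightarrow> real"
  assumes \<rho>_cont: "continuous_on UNIV \<rho>" and \<rho>_le: "\<And>z. \<bar>\<rho> z\<bar> \<le> 1"
    and f: "set_integrable lebesgue \<Omega> f"
    and \<eta>_cont: "isCont \<eta> x\<^sub>0" and \<eta>_nz: "\<eta> x\<^sub>0 \<noteq> 0"
  shows "isCont (\<lambda>x. LINT y:\<Omega>|lebesgue. \<rho> ((x - y) /\<^sub>R \<eta> x) * f y) x\<^sub>0"
proof (rule continuous_at_sequentiallyI)
  fix X :: "nat \<Rightarrow> 'a" assume X: "X \<longlonglongrightarrow> x\<^sub>0"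
  define g where "g y = indicator \<Omega> y * f y" for y
  have g: "integrable lebesgue g"
    using f unfolding set_integrable_def g_def by simp
  have [measurable]: "\<rho> \<in> borel_measurable borel"
    using \<rho>_cont by (rule borel_measurable_continuous_onI)
  note [measurable] = borel_measurable_integrable[OF g] lebesgue_measurable_ident
  have "(\<lambda>n. \<integral>y. \<rho> ((X n - y) /\<^sub>R \<eta> (X n)) * g y \<partial>lebesgue)
        \<longlonglongrightarrow> (\<integral>y. \<rho> ((x\<^sub>0 - y) /\<^sub>R \<eta> x\<^sub>0) * g y \<partial>lebesgue)"
  proof (rule integral_dominated_convergence[where w="\<lambda>y. \<bar>g y\<bar>"])
    show "AE y in lebesgue. norm (\<rho> ((X n - y) /\<^sub>R \<eta> (X n)) * g y) \<le> \<bar>g y\<bar>" for n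
      using \<rho>_le by (auto simp: abs_mult mult_left_le_one_le)
    show "AE y in lebesgue. (\<lambda>n. \<rho> ((X n - y) /\<^sub>R \<eta> (X n)) * g y) \<longlonglongrightarrow> \<rho> ((x\<^sub>0 - y) /\<^sub>R \<eta> x\<^sub>0) * g y"
    proof (intro AE_I2 tendsto_mult_right)
      fix y
      have "(\<lambda>n. \<eta> (X n)) \<longlonglongrightarrow> \<eta> x\<^sub>0"
        using \<eta>_cont X by (rule isCont_tendsto_compose)
      then have "(\<lambda>n. (X n - y) /\<^sub>R \<eta> (X n)) \<longlonglongrightarrow> (x\<^sub>0 - y) /\<^sub>R \<eta> x\<^sub>0"
        by (intro tendsto_intros X \<eta>_nz)
      moreover have "isCont \<rho> ((x\<^sub>0 - y) /\<^sub>R \<eta> x\<^sub>0)"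
        using \<rho>_cont by (simp add: continuous_on_eq_continuous_at)
      ultimately show "(\<lambda>n. \<rho> ((X n - y) /\<^sub>R \<eta> (X n))) \<longlonglongrightarrow> \<rho> ((x\<^sub>0 - y) /\<^sub>R \<eta> x\<^sub>0)"
        by (rule isCont_tendsto_compose[rotated])
    qed
  qed (use g in auto)
  then show "(\<lambda>n. LINT y:\<Omega>|lebesgue. \<rho> ((X n - y) /\<^sub>R \<eta> (X n)) * f y)
        \<longlonglongrightarrow> (LINT y:\<Omega>|lebesgue. \<rho> ((x\<^sub>0 - y) /\<^sub>R \<eta> x\<^sub>0) * f y)"
    unfolding set_lebesgue_integral_def g_def by (simp add: ac_simps)
qed

lemma abs_kernel_integral_le:
  fixes \<rho> f :: "'a::euclidean_space \<Rightarrow> real"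
  assumes \<rho>_meas: "\<rho> \<in> borel_measurable borel" and \<rho>_le: "\<And>z. \<bar>\<rho> z\<bar> \<le> 1"
    and \<rho>_supp: "\<And>z. 1 \<le> norm z \<Longrightarrow> \<rho> z = 0"
    and f: "set_integrable lebesgue \<Omega> f" and e: "0 < e" and ball_sub: "ball x e \<subseteq> \<Omega>"
  shows "\<bar>LINT y:\<Omega>|lebesgue. \<rho> ((x - y) /\<^sub>R e) * f y\<bar> \<le> (LINT y:ball x e|lebesgue. \<bar>f y\<bar>)"
proof -
  define g where "g y = indicator \<Omega> y * f y" for y
  have g: "integrable lebesgue g"
    using f unfolding set_integrable_def g_def by simp
  note [measurable] = borel_measurable_integrable[OF g] \<rho>_meas lebesgue_measurable_ident
  have pointwise: "\<bar>\<rho> ((x - y) /\<^sub>R e) * g y\<bar> \<le> indicator (ball x e) y * \<bar>f y\<bar>" for y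
  proof (cases "y \<in> ball x e")
    case True
    then show ?thesis
      using ball_sub \<rho>_le[of "(x - y) /\<^sub>R e"] by (auto simp: g_def abs_mult mult_left_le_one_le)
  next
    case False
    then have "e \<le> norm (x - y)"
      by (simp add: dist_norm)
    moreover have "norm ((x - y) /\<^sub>R e) = norm (x - y) / e"
      using e by (simp add: divide_inverse_commute)
    ultimately have "1 \<le> norm ((x - y) /\<^sub>R e)"
      using e by simp
    then show ?thesis using False \<rho>_supp by simp
  qed
  have ball_int: "integrable lebesgue (\<lambda>y. indicator (ball x e) y * \<bar>f y\<bar>)"
    using set_integrable_abs[OF set_integrable_subset[OF f _ ball_sub]]
    by (simp add: set_integrable_def)
  have "\<bar>\<integral>y. \<rho> ((x - y) /\<^sub>R e) * g y \<partial>lebesgue\<bar> \<le> (\<integral>y. \<bar>\<rho> ((x - y) /\<^sub>R e) * g y\<bar> \<partial>lebesgue)"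
    by (rule integral_abs_bound)
  also have "\<dots> \<le> (\<integral>y. indicator (ball x e) y * \<bar>f y\<bar> \<partial>lebesgue)"
    by (rule integral_mono[OF Bochner_Integration.integrable_bound[OF ball_int] ball_int pointwise])
       (use pointwise in auto)
  finally show ?thesis
    unfolding set_lebesgue_integral_def g_def by (simp add: ac_simps)
qed

lemma abs_T_op_le:
  fixes \<rho> \<eta> f :: "'a::euclidean_space \<Rightarrow> real"
  assumes \<rho>_meas: "\<rho> \<in> borel_measurable borel" and \<rho>_range: "\<And>z. 0 \<le> \<rho> z \<and> \<rho> z \<le> 1"
    and \<rho>_supp: "\<And>z. 1 \<le> norm z \<Longrightarrow> \<rho> z = 0"
    and f: "set_integrable lebesgue \<Omega> f" and \<eta>_pos: "0 < \<eta> x" and ball_sub: "ball x (\<eta> x) \<subseteq> \<Omega>"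
  shows "\<bar>T_op \<rho> \<eta> f x\<bar> \<le> M_rho \<rho> / \<eta> x ^ DIM('a) * (LINT y:ball x (\<eta> x)|lebesgue. \<bar>f y\<bar>)"
proof -
  have f_meas: "set_borel_measurable lebesgue \<Omega> f"
    using f unfolding set_integrable_def set_borel_measurable_def by (rule borel_measurable_integrable)
  have \<rho>_le: "\<bar>\<rho> z\<bar> \<le> 1" for z
    using \<rho>_range[of z] by simp
  have "\<bar>T_op \<rho> \<eta> f x\<bar> = M_rho \<rho> / \<eta> x ^ DIM('a) * \<bar>LINT y:\<Omega>|lebesgue. \<rho> ((x - y) /\<^sub>R \<eta> x) * f y\<bar>"
    using T_op_eq_kernel_integral[where \<eta>=\<eta> and x=x, OF \<rho>_meas \<rho>_supp f_meas \<eta>_pos ball_sub]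
      M_rho_nonneg[of \<rho>] \<rho>_range \<eta>_pos
    by (simp add: abs_mult)
  also have "\<dots> \<le> M_rho \<rho> / \<eta> x ^ DIM('a) * (LINT y:ball x (\<eta> x)|lebesgue. \<bar>f y\<bar>)"
    using M_rho_nonneg[of \<rho>] \<rho>_range \<eta>_pos
    by (intro mult_left_mono abs_kernel_integral_le[OF \<rho>_meas \<rho>_le \<rho>_supp f \<eta>_pos ball_sub]) auto
  finally show ?thesis .
qed

lemma continuous_on_T_op:
  fixes \<rho> \<eta> f :: "'a::euclidean_space \<Rightarrow> real"
  assumes \<rho>_cont: "continuous_on UNIV \<rho>" and \<rho>_le: "\<And>z. \<bar>\<rho> z\<bar> \<le> 1"
    and \<rho>_supp: "\<And>z. 1 \<le> norm z \<Longrightarrow> \<rho> z = 0" and \<eta>_cont: "continuous_on UNIV \<eta>"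
    and \<eta>_pos: "\<And>x. x \<in> U \<Longrightarrow> 0 < \<eta> x" and ball_sub: "\<And>x. x \<in> U \<Longrightarrow> ball x (\<eta> x) \<subseteq> \<Omega>"
    and f: "set_integrable lebesgue \<Omega> f"
  shows "continuous_on U (T_op \<rho> \<eta> f)"
proof -
  define K where "K = (\<lambda>x. LINT y:\<Omega>|lebesgue. \<rho> ((x - y) /\<^sub>R \<eta> x) * f y)"
  have \<rho>_meas: "\<rho> \<in> borel_measurable borel"
    using \<rho>_cont by (rule borel_measurable_continuous_onI)
  have f_meas: "set_borel_measurable lebesgue \<Omega> f"
    using f unfolding set_integrable_def set_borel_measurable_def by (rule borel_measurable_integrable)
  have "continuous_on U (\<lambda>x. M_rho \<rho> / \<eta> x ^ DIM('a) * K x)"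
  proof (intro continuous_at_imp_continuous_on ballI)
    fix x assume "x \<in> U"
    have \<eta>_isCont: "isCont \<eta> x"
      using \<eta>_cont by (simp add: continuous_on_eq_continuous_at)
    moreover have "isCont K x"
      unfolding K_def using \<eta>_pos[OF \<open>x \<in> U\<close>]
      by (intro isCont_kernel_integral[OF \<rho>_cont \<rho>_le f \<eta>_isCont]) simp
    ultimately show "isCont (\<lambda>x. M_rho \<rho> / \<eta> x ^ DIM('a) * K x) x"
      using \<eta>_pos[OF \<open>x \<in> U\<close>] by (intro continuous_intros) simp_all
  qed
  moreover have "M_rho \<rho> / \<eta> x ^ DIM('a) * K x = T_op \<rho> \<eta> f x" if "x \<in> U" for x
    unfolding K_def
    by (rule T_op_eq_kernel_integral[where \<eta>=\<eta> and x=x, OF \<rho>_meas \<rho>_supp f_meas \<eta>_pos[OF that] ball_sub[OF that], symmetric])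
  ultimately show ?thesis
    by (rule continuous_on_eq)
qed

lemma T_op_weak_L1_on_open:
  fixes \<rho> \<eta> f :: "'a::euclidean_space \<Rightarrow> real"
  assumes \<rho>_cont: "continuous_on UNIV \<rho>" and \<rho>_range: "\<And>z. 0 \<le> \<rho> z \<and> \<rho> z \<le> 1"
    and \<rho>_supp: "\<And>z. 1 \<le> norm z \<Longrightarrow> \<rho> z = 0" and \<eta>_cont: "continuous_on UNIV \<eta>"
    and U: "open U" "bounded U" and \<eta>_pos: "\<And>x. x \<in> U \<Longrightarrow> 0 < \<eta> x"
    and ball_sub: "\<And>x. x \<in> U \<Longrightarrow> ball x (\<eta> x) \<subseteq> \<Omega>"
    and f: "set_integrable lebesgue \<Omega> f" and lam: "0 < lam"
  defines "E \<equiv> {x \<in> U. lam < \<bar>T_op \<rho> \<eta> f x\<bar>}"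
  shows "E \<in> sets lebesgue"
    and "measure lebesgue E
           \<le> 5 ^ DIM('a) * measure lebesgue (ball (0::'a) 1) * M_rho \<rho> / lam * (LINT y:\<Omega>|lebesgue. \<bar>f y\<bar>)"
proof -
  define \<omega> where "\<omega> = measure lebesgue (ball (0::'a) 1)"
  have \<rho>_meas: "\<rho> \<in> borel_measurable borel"
    using \<rho>_cont by (rule borel_measurable_continuous_onI)
  have \<rho>_le: "\<bar>\<rho> z\<bar> \<le> 1" for z
    using \<rho>_range[of z] by simp
  have "continuous_on U (T_op \<rho> \<eta> f)"
    using continuous_on_T_op[OF \<rho>_cont \<rho>_le \<rho>_supp \<eta>_cont \<eta>_pos ball_sub f] .
  moreover have "open {v::real. lam < \<bar>v\<bar>}"
    by (intro open_Collect_less continuous_intros)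
  ultimately have "open (T_op \<rho> \<eta> f -` {v. lam < \<bar>v\<bar>} \<inter> U)"
    using continuous_on_open_vimage[OF U(1)] by blast
  moreover have "T_op \<rho> \<eta> f -` {v. lam < \<bar>v\<bar>} \<inter> U = E"
    unfolding E_def by auto
  ultimately show E_sets: "E \<in> sets lebesgue"
    by simp
  have ball_le: "measure lebesgue (ball x (\<eta> x)) \<le> \<omega> * M_rho \<rho> / lam * (LINT y:ball x (\<eta> x)|lebesgue. \<bar>f y\<bar>)"
    if "x \<in> E" for x
  proof -
    have x: "x \<in> U" "0 < \<eta> x" "lam < \<bar>T_op \<rho> \<eta> f x\<bar>"
      using that \<eta>_pos unfolding E_def by auto
    have "lam < M_rho \<rho> / \<eta> x ^ DIM('a) * (LINT y:ball x (\<eta> x)|lebesgue. \<bar>f y\<bar>)"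
      using x(3) abs_T_op_le[where \<eta>=\<eta> and x=x, OF \<rho>_meas \<rho>_range \<rho>_supp f x(2) ball_sub[OF x(1)]]
      by simp
    then have "\<omega> * (\<eta> x ^ DIM('a) * lam) \<le> \<omega> * (M_rho \<rho> * (LINT y:ball x (\<eta> x)|lebesgue. \<bar>f y\<bar>))"
      using x(2) by (intro mult_left_mono) (simp_all add: \<omega>_def field_simps)
    moreover have "measure lebesgue (ball x (\<eta> x)) = \<eta> x ^ DIM('a) * \<omega>"
      unfolding \<omega>_def using content_ball_conv_unit_ball[of "\<eta> x" x] x(2) by simp
    ultimately show ?thesis
      using lam by (simp add: field_simps)
  qed
  have "bounded E"
    using U(2) unfolding E_def by (rule bounded_subset) auto
  then have "measure lebesgue E \<le> 5 ^ DIM('a) * (\<omega> * M_rho \<rho> / lam) * (LINT y:\<Omega>|lebesgue. \<bar>f y\<bar>)"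
    by (rule Vitali_measure_le[where r=\<eta>, OF E_sets _ _ _ set_integrable_abs[OF f] _ _ ball_le])
       (use \<eta>_pos ball_sub \<rho>_range lam in \<open>auto simp: E_def \<omega>_def M_rho_nonneg\<close>)
  then show "measure lebesgue E
           \<le> 5 ^ DIM('a) * measure lebesgue (ball (0::'a) 1) * M_rho \<rho> / lam * (LINT y:\<Omega>|lebesgue. \<bar>f y\<bar>)"
    unfolding \<omega>_def by (simp add: mult.assoc)
qed

theorem proposition3p1:
  fixes \<Omega> \<Delta> :: "'a::euclidean_space set"
    and \<rho> \<eta> :: "'a \<Rightarrow> real"
  assumes \<Omega>_open: "open \<Omega>" and \<Omega>_bdd: "bounded \<Omega>"
    and \<rho>_smooth: "smooth_fun \<rho>"
    and \<rho>_supp: "compact (closure {x. \<rho> x \<noteq> 0})"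
    and \<rho>_range: "\<And>x. 0 \<le> \<rho> x \<and> \<rho> x \<le> 1"
    and \<rho>_zero: "\<And>x. \<rho> x = 0 \<longleftrightarrow> norm x \<ge> 1"
    and \<rho>_radial: "\<And>x y. norm x = norm y \<Longrightarrow> \<rho> x = \<rho> y"
    and \<rho>_half: "\<And>x y. norm x < 1/2 \<Longrightarrow> norm y = 1/2 \<Longrightarrow> \<rho> x \<ge> \<rho> y"
    and \<Delta>_sub: "\<Delta> \<subseteq> closure \<Omega>"
    and \<Theta>_closed: "closed (frontier \<Omega> \<union> \<Delta>)"
    and \<eta>_smooth: "smooth_fun \<eta>"
    and \<eta>_nonneg: "\<And>x. \<eta> x \<ge> 0"
    and \<eta>_zero: "\<eta> -` {0} = frontier \<Omega> \<union> \<Delta>"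
    and \<eta>_flat: "\<And>vs x. set vs \<subseteq> Basis \<Longrightarrow> x \<in> frontier \<Omega> \<union> \<Delta> \<Longrightarrow> iter_pd vs \<eta> x = 0"
    and \<eta>_dist: "\<And>x. x \<notin> frontier \<Omega> \<union> \<Delta> \<Longrightarrow> \<eta> x < infdist x (frontier \<Omega> \<union> \<Delta>)"
  shows "\<exists>M1 > 0. \<forall>f. set_integrable lebesgue \<Omega> f \<longrightarrow> (\<forall>lam > 0.
           {x \<in> \<Omega>. \<bar>T_op \<rho> \<eta> f x\<bar> > lam} \<in> sets lebesgue \<and>
           measure lebesgue {x \<in> \<Omega>. \<bar>T_op \<rho> \<eta> f x\<bar> > lam}
             \<le> M1 / lam * (LINT x : \<Omega> | lebesgue. \<bar>f x\<bar>))"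
proof -
  define \<Theta> where "\<Theta> = frontier \<Omega> \<union> \<Delta>"
  define C where "C = 5 ^ DIM('a) * measure lebesgue (ball (0::'a) 1) * M_rho \<rho>"
  have \<rho>_cont: "continuous_on UNIV \<rho>" and \<eta>_cont: "continuous_on UNIV \<eta>"
    using \<rho>_smooth \<eta>_smooth by (simp_all add: smooth_fun_imp_continuous)
  have \<rho>_outside: "\<And>z. 1 \<le> norm z \<Longrightarrow> \<rho> z = 0" and \<rho>_inside: "\<And>z. norm z < 1 \<Longrightarrow> 0 < \<rho> z"
    using \<rho>_zero \<rho>_range by (auto simp: order.strict_iff_order)
  have M_pos: "0 < M_rho \<rho>"
    using \<rho>_cont \<rho>_range \<rho>_inside by (intro M_rho_pos borel_measurable_continuous_onI)
  have U_props: "open (\<Omega> - \<Theta>)" "bounded (\<Omega> - \<Theta>)" "\<And>x. x \<in> \<Omega> - \<Theta> \<Longrightarrow> 0 < \<eta> x"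
    using \<Omega>_open \<Theta>_closed \<Omega>_bdd \<eta>_nonneg \<eta>_zero
    by (auto simp: \<Theta>_def order.strict_iff_order intro: bounded_subset)
  have U_balls: "ball x (\<eta> x) \<subseteq> \<Omega>" if "x \<in> \<Omega> - \<Theta>" for x
    using that \<eta>_dist[of x] by (intro ball_subset_if_less_infdist[where \<Theta>=\<Theta>]) (auto simp: \<Theta>_def)
  show ?thesis
  proof (intro exI[of _ "C + 1"] conjI allI impI)
    show "0 < C + 1"
      using M_pos by (simp add: C_def add_pos_nonneg)
    fix f :: "'a \<Rightarrow> real" and lam :: real
    assume f: "set_integrable lebesgue \<Omega> f" and lam: "0 < lam"
    have superlevel_split: "{x \<in> \<Omega>. \<bar>T_op \<rho> \<eta> f x\<bar> > lam}
        = {x \<in> \<Omega> - \<Theta>. lam < \<bar>T_op \<rho> \<eta> f x\<bar>} \<union> {x \<in> \<Omega> \<inter> \<Theta>. lam < \<bar>f x\<bar>}"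
      using T_op_eq_self[of \<rho> \<eta> _ f] M_pos \<eta>_zero unfolding \<Theta>_def by (auto simp: vimage_def set_eq_iff)
    note inner = T_op_weak_L1_on_open[OF \<rho>_cont \<rho>_range \<rho>_outside \<eta>_cont U_props U_balls f lam]
    note boundary = measure_abs_greater_le_set_integral[OF f _ _ _ lam, of "\<Omega> \<inter> \<Theta>"]
    show "{x \<in> \<Omega>. \<bar>T_op \<rho> \<eta> f x\<bar> > lam} \<in> sets lebesgue"
      unfolding superlevel_split using inner(1) boundary(1) \<Omega>_open \<Theta>_closed by (simp add: \<Theta>_def)
    have "measure lebesgue {x \<in> \<Omega>. \<bar>T_op \<rho> \<eta> f x\<bar> > lam}
        \<le> C / lam * (LINT x:\<Omega>|lebesgue. \<bar>f x\<bar>) + (LINT x:\<Omega>|lebesgue. \<bar>f x\<bar>) / lam"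
      unfolding superlevel_split using inner boundary \<Omega>_open \<Theta>_closed
      by (intro measure_Un_le[THEN order_trans] add_mono) (auto simp: \<Theta>_def C_def)
    then show "measure lebesgue {x \<in> \<Omega>. \<bar>T_op \<rho> \<eta> f x\<bar> > lam}
        \<le> (C + 1) / lam * (LINT x:\<Omega>|lebesgue. \<bar>f x\<bar>)"
      using lam by (simp add: field_simps)
  qed
qed

end
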